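(* Let $n\ge 2$, let $\mathcal{S}\subseteq(\mathbb{C}^d)^{\otimes n}$ be the permutation-symmetric subspace, and let $|\psi\rangle,|\varphi\rangle\in\mathcal{S}$ be such that $A_1\otimes\cdots\otimes A_n|\psi\rangle=|\varphi\rangle$ for some invertible $d\times d$ matrices $A_1,\ldots,A_n$. Then there is an invertible $d\times d$ matrix $A$ such that for every $d\times d$ matrix $B$ with $B_{(1)}|\psi\rangle\in\mathcal{S}$ one has $(ABA^{-1})_{(1)}|\varphi\rangle\in\mathcal{S}$, and for every $B'$ with $B'_{(1)}|\varphi\rangle\in\mathcal{S}$ one has $(A^{-1}B'A)_{(1)}|\psi\rangle\in\mathcal{S}$. In particular, the set of Jordan normal forms of matrices $B$ with $B_{(1)}|\psi\rangle\in\mathcal{S}$ coincides with that for $|\varphi\rangle$.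
   Context: $\mathcal{S}$ is the set of vectors in $(\mathbb{C}^d)^{\otimes n}$ invariant under all permutations of the $n$ tensor factors. For a $d\times d$ matrix $Y$, $Y_{(1)}$ denotes $Y\otimes\mathbb{I}\otimes\cdots\otimes\mathbb{I}$ on $(\mathbb{C}^d)^{\otimes n}$. *)

theory Defs
  imports "HOL-Analysis.Analysis" "HOL-Combinatorics.Permutations"
begin

text \<open>Tensors in (C^d)^{\<otimes>n}: the basis of C^d is indexed by the finite type 'd,
  a tensor is a coefficient function on index words of length n (zero elsewhere).\<close>

definition is_tensor :: "nat \<Rightarrow> ('d::finite list \<Rightarrow> complex) \<Rightarrow> bool" where
  "is_tensor n T \<longleftrightarrow> (\<forall>xs. length xs \<noteq> n \<longrightarrow> T xs = 0)"

definition sym_space :: "nat \<Rightarrow> ('d::finite list \<Rightarrow> complex) set" where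
  "sym_space n = {T. is_tensor n T \<and>
      (\<forall>p xs. p permutes {..<n} \<and> length xs = n \<longrightarrow> T (permute_list p xs) = T xs)}"

definition kron_apply :: "(nat \<Rightarrow> complex^'d^'d) \<Rightarrow> nat \<Rightarrow> ('d::finite list \<Rightarrow> complex) \<Rightarrow> ('d list \<Rightarrow> complex)" where
  "kron_apply As n T = (\<lambda>xs. if length xs = n then
      (\<Sum>ys\<in>{ys. length ys = n}. (\<Prod>k<n. As k $ (xs ! k) $ (ys ! k)) * T ys) else 0)"

definition first_apply :: "complex^'d^'d \<Rightarrow> nat \<Rightarrow> ('d::finite list \<Rightarrow> complex) \<Rightarrow> ('d list \<Rightarrow> complex)" where
  "first_apply Y n T = kron_apply (\<lambda>k. if k = 0 then Y else mat 1) n T"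

end

theory Submission
  imports
    Defs
    "HOL-Computational_Algebra.Polynomial_Factorial"
    "HOL-Computational_Algebra.Field_as_Ring"
    "HOL-Computational_Algebra.Fundamental_Theorem_Algebra"
begin

(*
  Write X_(k) for X acting on tensor factor k, counted from 0 (the paper's B_(1) is slot 0).
  If phi = (A_0 \<otimes> ... \<otimes> A_(n-1)) psi with psi and phi symmetric, comparing phi with its
  image under the transposition of factors i and j shows that M = A_j^-1 A_i satisfies
  M_(i) psi = M_(j) psi.  For a uniform product A \<otimes> ... \<otimes> A the claim is immediate,
  since (A B A^-1)_(k) phi is the image of B_(k) psi for every slot k.  For n \<ge> 3 take
  A = A_0: then (A_0 B A_0^-1)_(j) phi is the image of (M B M^-1)_(j) psi with
  M = A_j^-1 A_0, and moving M and M^-1 to slot 0 while B waits in a third slot turns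
  this into B_(0) psi.  For n = 2 there is no third slot; instead phi = (A_1 R \<otimes> A_1 R) psi,
  where R is a square root of M = A_1^-1 A_0 that is a polynomial in M, so that R moves
  between the slots as M does.  Such R exists because M is invertible and X has a square root
  modulo every polynomial that does not vanish at 0.
*)

section \<open>Square roots of X modulo polynomials\<close>

lemma sqrt_X_mod_linear_power:
  fixes l :: complex
  assumes "l \<noteq> 0"
  shows "\<exists>p. [:-l, 1:] ^ Suc m dvd p\<^sup>2 - [:0, 1:]"
proof (induction m)
  case 0
  have "[:csqrt l:]\<^sup>2 - [:0, 1:] = [:-l, 1:] * [:-1:]"
    using power2_csqrt[of l] by (simp add: power2_eq_square)
  then have "[:-l, 1:] dvd [:csqrt l:]\<^sup>2 - [:0, 1:]" by (simp only: dvd_triv_left)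
  then show ?case by auto
next
  case (Suc m)
  define t :: "complex poly" where "t = [:-l, 1:]"
  obtain p where "t ^ Suc m dvd p\<^sup>2 - [:0, 1:]"
    using Suc.IH unfolding t_def ..
  then obtain h where ph: "p\<^sup>2 - [:0, 1:] = t ^ Suc m * h" ..
  have "(poly p l)\<^sup>2 = l"
    using arg_cong[OF ph, of "\<lambda>q. poly q l"] by (simp add: t_def)
  then have pl: "poly p l \<noteq> 0" using assms by auto
  \<comment> \<open>Newton step: add to p the multiple of t^(m+1) that kills the next Taylor coefficient at l.\<close>
  define c where "c = - poly h l / (2 * poly p l)"
  define g where "g = h + smult c p + smult c p + smult (c\<^sup>2) (t ^ Suc m)"
  have "(p + smult c (t ^ Suc m))\<^sup>2 - [:0, 1:] = t ^ Suc m * g"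
    using ph by (simp add: g_def power2_eq_square algebra_simps)
  moreover have "t dvd g"
    using pl by (simp add: g_def c_def t_def poly_eq_0_iff_dvd[symmetric] field_simps)
  ultimately have "t ^ Suc (Suc m) dvd (p + smult c (t ^ Suc m))\<^sup>2 - [:0, 1:]"
    by (simp add: mult_dvd_mono)
  then show ?case unfolding t_def by blast
qed

lemma sqrt_mod_mult_coprime:
  fixes a b :: "'a::euclidean_ring_gcd"
  assumes "coprime a b" and "a dvd p\<^sup>2 - c" and "b dvd q\<^sup>2 - c"
  shows "\<exists>r. a * b dvd r\<^sup>2 - c"
proof -
  have dvd_sq: "d dvd r\<^sup>2 - c" if "d dvd r - s" and "d dvd s\<^sup>2 - c" for d r s :: 'a
  proof -
    have "r\<^sup>2 - c = (r - s) * (r + s) + (s\<^sup>2 - c)" by (simp add: power2_eq_square algebra_simps)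
    then show ?thesis using that by (metis dvd_add dvd_mult2)
  qed
  obtain u v where uv: "u * a + v * b = 1"
    using bezout_coefficients_fst_snd[of a b] assms(1) by (auto simp: coprime_imp_gcd_eq_1)
  define r where "r = p * v * b + q * u * a"
  have "r - p = p * (u * a + v * b - 1) + a * (u * (q - p))"
    and "r - q = q * (u * a + v * b - 1) + b * (v * (p - q))"
    by (simp_all add: r_def algebra_simps)
  then have "r - p = a * (u * (q - p))" and "r - q = b * (v * (p - q))"
    using uv by simp_all
  then have "a dvd r\<^sup>2 - c" and "b dvd r\<^sup>2 - c"
    using dvd_sq assms(2,3) by (metis dvd_triv_left)+
  then show ?thesis using assms(1) by (blast intro: divides_mult)
qed

lemma sqrt_X_mod:
  fixes q :: "complex poly"
  assumes "poly q 0 \<noteq> 0"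
  shows "\<exists>p. q dvd p\<^sup>2 - [:0, 1:]"
  using assms
proof (induction "degree q" arbitrary: q rule: less_induct)
  case less
  show ?case
  proof (cases "degree q = 0")
    case True
    then have "is_unit q"
      using less.prems by (auto elim!: degree_eq_zeroE simp: is_unit_const_poly_iff dvd_field_iff)
    then show ?thesis by blast
  next
    case False
    then obtain l where l: "poly q l = 0"
      using fundamental_theorem_of_algebra[of q] constant_degree[of q] by auto
    have q0: "q \<noteq> 0" and l0: "l \<noteq> 0" using l less.prems by auto
    obtain g where g: "q = [:-l, 1:] ^ order l q * g" and ng: "\<not> [:-l, 1:] dvd g"
      using order_decomp[OF q0] by blast
    have m: "order l q \<noteq> 0" using l q0 order_root by blast
    have "degree q = order l q + degree g"
      using g q0 by (metis degree_linear_power degree_mult_eq mult_eq_0_iff)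
    then have "degree g < degree q" using m by simp
    moreover have "poly g 0 \<noteq> 0" using less.prems g by (metis mult_eq_0_iff poly_mult)
    ultimately obtain p1 where "g dvd p1\<^sup>2 - [:0, 1:]" using less.hyps by blast
    moreover obtain p2 where "[:-l, 1:] ^ order l q dvd p2\<^sup>2 - [:0, 1:]"
      using sqrt_X_mod_linear_power[OF l0, of "order l q - 1"] m by auto
    moreover have "coprime ([:-l, 1:] ^ order l q) g"
      using ng by (simp add: prime_elem_imp_coprime prime_elem_linear_field_poly)
    ultimately show ?thesis using g sqrt_mod_mult_coprime by metis
  qed
qed

section \<open>Polynomials evaluated at matrices\<close>

lemma matrix_add_rdistrib: "((A::'a::semiring_1^'n^'m) + B) ** C = A ** C + B ** C"
  by (vector matrix_matrix_mult_def sum.distrib[symmetric] field_simps)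

lemma mat_mult_component: "(mat c ** (X::'a::semiring_1^'n^'m)) $ i $ j = c * X $ i $ j"
  by (simp add: matrix_matrix_mult_def mat_def if_distrib if_distribR sum.delta' cong: if_cong)

lemma mult_mat_component: "((X::'a::comm_semiring_1^'n^'m) ** mat c) $ i $ j = c * X $ i $ j"
  by (simp add: matrix_matrix_mult_def mat_def if_distrib if_distribR sum.delta' mult.commute
      cong: if_cong)

lemma mat_mult_commute: "mat c ** (X::'a::comm_semiring_1^'n^'n) = X ** mat c"
  by (simp add: vec_eq_iff mat_mult_component mult_mat_component)

lemma mat_add: "mat (a + b) = (mat a + mat b :: 'a::semiring_1^'n^'n)"
  by (simp add: vec_eq_iff mat_def)

lemma mat_mult_mat: "mat a ** mat b = (mat (a * b) :: 'a::semiring_1^'n^'n)"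
  by (simp add: vec_eq_iff mat_mult_component) (simp add: mat_def)

lemma mat_of_real_mult: "mat (of_real r) ** X = r *\<^sub>R (X::'a::real_algebra_1^'n^'m)"
  by (simp add: vec_eq_iff mat_mult_component flip: scaleR_conv_of_real)

lemma matrix_inv_left: "invertible (A::'a::semiring_1^'n^'m) \<Longrightarrow> matrix_inv A ** A = mat 1"
  unfolding invertible_def matrix_inv_def by (rule someI2_ex) auto

lemma matrix_inv_right: "invertible (A::'a::semiring_1^'n^'m) \<Longrightarrow> A ** matrix_inv A = mat 1"
  unfolding invertible_def matrix_inv_def by (rule someI2_ex) auto

lemma invertible_matrix_inv: "invertible (A::'a::semiring_1^'n^'m) \<Longrightarrow> invertible (matrix_inv A)"
  using matrix_inv_left matrix_inv_right invertible_def by metis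

lemma matrix_inv_matrix_inv:
  assumes "invertible (A::'a::semiring_1^'n^'m)"
  shows "matrix_inv (matrix_inv A) = A"
proof -
  have "matrix_inv (matrix_inv A) = matrix_inv (matrix_inv A) ** (matrix_inv A ** A)"
    using matrix_inv_left[OF assms] by simp
  also have "\<dots> = A"
    using matrix_inv_left[OF invertible_matrix_inv[OF assms]] by (simp add: matrix_mul_assoc)
  finally show ?thesis .
qed

lemma matrix_inv_mult_cancel:
  fixes A B :: "'a::semiring_1^'n^'n"
  assumes "invertible A" and "invertible B"
  shows "(matrix_inv A ** B) ** (matrix_inv B ** A) = mat 1"
proof -
  have "(matrix_inv A ** B) ** (matrix_inv B ** A) = matrix_inv A ** (B ** matrix_inv B) ** A"
    by (simp add: matrix_mul_assoc)
  then show ?thesis using assms by (simp add: matrix_inv_left matrix_inv_right)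
qed

definition poly_matrix :: "'a::comm_ring_1 poly \<Rightarrow> 'a^'n^'n \<Rightarrow> 'a^'n^'n" where
  "poly_matrix p M = foldr (\<lambda>a X. mat a + M ** X) (coeffs p) 0"

lemma poly_matrix_0 [simp]: "poly_matrix 0 M = 0"
  by (simp add: poly_matrix_def)

lemma poly_matrix_pCons: "poly_matrix (pCons a p) M = mat a + M ** poly_matrix p M"
  by (cases "a = 0 \<and> p = 0") (auto simp: poly_matrix_def cCons_def)

lemma poly_matrix_X: "poly_matrix [:0, 1:] M = M"
  by (simp add: poly_matrix_pCons)

lemma poly_matrix_add: "poly_matrix (p + q) M = poly_matrix p M + poly_matrix q M"
proof (induction p arbitrary: q)
  case (pCons a p)
  then show ?case
    by (cases q) (simp add: poly_matrix_pCons mat_add matrix_add_ldistrib algebra_simps)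
qed simp

lemma poly_matrix_diff: "poly_matrix (p - q) M = poly_matrix p M - poly_matrix q M"
  using poly_matrix_add[of "p - q" q M] by (simp add: eq_diff_eq)

lemma poly_matrix_sum: "poly_matrix (\<Sum>i\<in>I. f i) M = (\<Sum>i\<in>I. poly_matrix (f i) M)"
  by (induction I rule: infinite_finite_induct) (auto simp: poly_matrix_add)

lemma poly_matrix_smult: "poly_matrix (smult c p) M = mat c ** poly_matrix p M"
proof (induction p)
  case (pCons a p)
  have "mat c ** (M ** poly_matrix p M) = M ** (mat c ** poly_matrix p M)"
    by (metis mat_mult_commute matrix_mul_assoc)
  with pCons.IH show ?case
    by (simp add: poly_matrix_pCons matrix_add_ldistrib mat_mult_mat)
qed simp

lemma poly_matrix_mult: "poly_matrix (p * q) M = poly_matrix p M ** poly_matrix q M"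
proof (induction p)
  case (pCons a p)
  have "poly_matrix (pCons a p * q) M = mat a ** poly_matrix q M + M ** poly_matrix (p * q) M"
    by (simp add: poly_matrix_add poly_matrix_smult poly_matrix_pCons)
  with pCons.IH show ?case
    by (simp add: poly_matrix_pCons matrix_add_rdistrib matrix_mul_assoc)
qed simp

lemma poly_matrix_commute: "M ** poly_matrix p M = poly_matrix p M ** M"
  by (metis poly_matrix_mult poly_matrix_X mult.commute)

lemma poly_matrix_monom: "poly_matrix (monom c i) M = mat c ** poly_matrix ([:0, 1:] ^ i) M"
  by (simp add: monom_altdef poly_matrix_smult)

lemma poly_matrix_annihilator_exists:
  fixes M :: "complex^'n^'n"
  shows "\<exists>q. q \<noteq> 0 \<and> poly_matrix q M = 0"
proof -
  define P where "P k = poly_matrix ([:0, 1:] ^ k) M" for k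
  define D where "D = DIM(complex^'n^'n)"
  \<comment> \<open>Either two of the D + 1 powers of M coincide, or they are linearly dependent over the reals.\<close>
  show ?thesis
  proof (cases "inj_on P {..D}")
    case False
    then obtain i j where ij: "i < j" "P i = P j"
      unfolding inj_on_def by (metis linorder_neqE_nat)
    define q :: "complex poly" where "q = monom 1 j - monom 1 i"
    have "coeff q j = 1" using ij by (simp add: q_def coeff_monom)
    then have "q \<noteq> 0" by auto
    moreover have "poly_matrix q M = 0"
      using ij by (simp add: q_def poly_matrix_diff poly_matrix_monom P_def)
    ultimately show ?thesis by blast
  next
    case True
    define S where "S = P ` {..D}"
    have "card S = Suc D" using True by (simp add: S_def card_image)
    then have "dependent S" by (intro dependent_biggerset) (simp_all add: S_def D_def)
    then obtain u where u: "\<exists>v\<in>S. u v \<noteq> 0" "(\<Sum>v\<in>S. u v *\<^sub>R v) = 0"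
      by (auto simp: S_def dependent_finite)
    define q where "q = (\<Sum>i\<le>D. monom (complex_of_real (u (P i))) i)"
    have "poly_matrix q M = (\<Sum>i\<le>D. u (P i) *\<^sub>R P i)"
      by (simp add: q_def poly_matrix_sum poly_matrix_monom mat_of_real_mult P_def)
    also have "\<dots> = (\<Sum>v\<in>S. u v *\<^sub>R v)"
      unfolding S_def using True by (simp add: sum.reindex)
    finally have "poly_matrix q M = 0" using u by simp
    moreover obtain i where "i \<le> D" "u (P i) \<noteq> 0" using u(1) by (auto simp: S_def)
    then have "coeff q i \<noteq> 0" by (simp add: q_def coeff_sum coeff_monom)
    ultimately show ?thesis by (intro exI[of _ q]) auto
  qed
qed

lemma invertible_poly_matrix_annihilator:
  fixes M :: "complex^'n^'n"
  assumes "invertible M"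
  shows "\<exists>g. poly g 0 \<noteq> 0 \<and> poly_matrix g M = 0"
proof -
  obtain q where q: "q \<noteq> 0" "poly_matrix q M = 0"
    using poly_matrix_annihilator_exists by blast
  obtain g where g: "q = [:0, 1:] ^ order 0 q * g" "\<not> [:0, 1:] dvd g"
    using order_decomp[OF q(1), of 0] by auto
  have "poly_matrix g M = 0" if "poly_matrix ([:0, 1:] ^ k * g) M = 0" for k
    using that
  proof (induction k)
    case (Suc k)
    have "[:0, 1:] ^ Suc k * g = [:0, 1:] * ([:0, 1:] ^ k * g)" by (simp add: mult.assoc)
    then have "M ** poly_matrix ([:0, 1:] ^ k * g) M = 0"
      using Suc.prems by (simp only: poly_matrix_mult poly_matrix_X)
    then have "matrix_inv M ** M ** poly_matrix ([:0, 1:] ^ k * g) M = 0"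
      by (simp flip: matrix_mul_assoc)
    then show ?case using Suc.IH by (simp add: matrix_inv_left[OF assms])
  qed simp
  then have "poly_matrix g M = 0" using q g by metis
  moreover have "poly g 0 \<noteq> 0" using g(2) by (simp add: dvd_iff_poly_eq_0)
  ultimately show ?thesis by blast
qed

lemma invertible_matrix_sqrt:
  fixes M :: "complex^'n^'n"
  assumes "invertible M"
  shows "\<exists>p. poly_matrix p M ** poly_matrix p M = M"
proof -
  obtain g where g: "poly g 0 \<noteq> 0" "poly_matrix g M = 0"
    using invertible_poly_matrix_annihilator[OF assms] by blast
  obtain p where "g dvd p\<^sup>2 - [:0, 1:]" using sqrt_X_mod[OF g(1)] ..
  then obtain h where "p\<^sup>2 - [:0, 1:] = g * h" ..
  then have "p * p = [:0, 1:] + g * h" by (simp add: power2_eq_square algebra_simps)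
  then have "poly_matrix (p * p) M = M"
    by (simp add: poly_matrix_add poly_matrix_mult poly_matrix_X g(2))
  then show ?thesis by (auto simp: poly_matrix_mult)
qed

section \<open>Tensor products of matrices\<close>

lemma sum_lists_length_prod:
  fixes f :: "nat \<Rightarrow> 'a::finite \<Rightarrow> 'b::comm_semiring_1"
  shows "(\<Sum>ys\<in>{ys. length ys = n}. \<Prod>k<n. f k (ys ! k)) = (\<Prod>k<n. \<Sum>y\<in>UNIV. f k y)"
proof (induction n arbitrary: f)
  case 0
  have "{ys::'a list. length ys = 0} = {[]}" by auto
  then show ?case by simp
next
  case (Suc n)
  have lists: "{ys::'a list. length ys = Suc n} = (\<lambda>(y, ys). y # ys) ` (UNIV \<times> {ys. length ys = n})"
    by (auto simp: length_Suc_conv image_iff)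
  have inj: "inj_on (\<lambda>(y, ys). y # ys) (UNIV \<times> {ys::'a list. length ys = n})"
    by (auto simp: inj_on_def)
  have "(\<Sum>ys\<in>{ys::'a list. length ys = Suc n}. \<Prod>k<Suc n. f k (ys ! k))
      = (\<Sum>(y, ys)\<in>UNIV \<times> {ys::'a list. length ys = n}. f 0 y * (\<Prod>k<n. f (Suc k) (ys ! k)))"
    unfolding lists sum.reindex[OF inj] prod.lessThan_Suc_shift by (simp add: case_prod_beta)
  also have "\<dots> = (\<Sum>y\<in>UNIV. f 0 y) * (\<Sum>ys\<in>{ys::'a list. length ys = n}. \<Prod>k<n. f (Suc k) (ys ! k))"
    by (simp add: sum_product sum.cartesian_product)
  also have "\<dots> = (\<Prod>k<Suc n. \<Sum>y\<in>UNIV. f k y)"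
    unfolding prod.lessThan_Suc_shift using Suc.IH[of "\<lambda>k. f (Suc k)"] by simp
  finally show ?case .
qed

lemma kron_apply_cong:
  "(\<And>k. k < n \<Longrightarrow> As k = Bs k) \<Longrightarrow> kron_apply As n T = kron_apply Bs n T"
  unfolding kron_apply_def by (intro ext) (auto intro!: sum.cong prod.cong)

lemma is_tensor_kron_apply: "is_tensor n (kron_apply As n T)"
  by (simp add: is_tensor_def kron_apply_def)

lemma kron_apply_comp:
  fixes T :: "'d::finite list \<Rightarrow> complex"
  shows "kron_apply As n (kron_apply Bs n T) = kron_apply (\<lambda>k. As k ** Bs k) n T"
proof (rule ext)
  fix xs :: "'d list"
  let ?L = "{ys::'d list. length ys = n}"
  show "kron_apply As n (kron_apply Bs n T) xs = kron_apply (\<lambda>k. As k ** Bs k) n T xs"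
  proof (cases "length xs = n")
    case True
    have "kron_apply As n (kron_apply Bs n T) xs = (\<Sum>ys\<in>?L. \<Sum>zs\<in>?L.
        (\<Prod>k<n. As k $ (xs ! k) $ (ys ! k)) * ((\<Prod>k<n. Bs k $ (ys ! k) $ (zs ! k)) * T zs))"
      using True by (simp add: kron_apply_def sum_distrib_left)
    also have "\<dots> = (\<Sum>zs\<in>?L.
        (\<Sum>ys\<in>?L. \<Prod>k<n. As k $ (xs ! k) $ (ys ! k) * Bs k $ (ys ! k) $ (zs ! k)) * T zs)"
      by (subst sum.swap) (simp add: sum_distrib_right prod.distrib mult.assoc)
    also have "\<dots> = (\<Sum>zs\<in>?L. (\<Prod>k<n. \<Sum>y\<in>UNIV. As k $ (xs ! k) $ y * Bs k $ y $ (zs ! k)) * T zs)"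
      using sum_lists_length_prod[of "\<lambda>k y. As k $ (xs ! k) $ y * Bs k $ y $ (_ ! k)" n]
      by simp
    also have "\<dots> = kron_apply (\<lambda>k. As k ** Bs k) n T xs"
      using True by (simp add: kron_apply_def matrix_matrix_mult_def)
    finally show ?thesis .
  qed (simp add: kron_apply_def)
qed

lemma kron_apply_mat_1:
  fixes T :: "'d::finite list \<Rightarrow> complex"
  assumes "is_tensor n T"
  shows "kron_apply (\<lambda>_. mat 1) n T = T"
proof (rule ext)
  fix xs :: "'d list"
  show "kron_apply (\<lambda>_. mat 1) n T xs = T xs"
  proof (cases "length xs = n")
    case True
    have delta: "(\<Prod>k<n. (mat 1 :: complex^'d^'d) $ (xs ! k) $ (ys ! k)) = (if xs = ys then 1 else 0)"
      if ys: "length ys = n" for ys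
    proof (cases "xs = ys")
      case False
      then obtain k where "k < n" "xs ! k \<noteq> ys ! k"
        using False True ys by (metis nth_equalityI)
      then show ?thesis
        using False by (intro trans[OF prod_zero]) (auto simp: mat_def intro!: bexI[of _ k])
    qed (simp add: mat_def)
    have "kron_apply (\<lambda>_. mat 1) n T xs = (\<Sum>ys\<in>{ys. length ys = n}. if xs = ys then T ys else 0)"
      using True by (auto simp: kron_apply_def delta intro!: sum.cong)
    also have "\<dots> = T xs"
      using True finite_lists_length_eq[of "UNIV :: 'd set" n] by simp
    finally show ?thesis .
  qed (use assms in \<open>simp add: kron_apply_def is_tensor_def\<close>)
qed

lemma kron_apply_inverse:
  assumes "is_tensor n T" and "\<forall>k<n. invertible (As k)"
  shows "kron_apply (\<lambda>k. matrix_inv (As k)) n (kron_apply As n T) = T"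
proof -
  have "kron_apply (\<lambda>k. matrix_inv (As k)) n (kron_apply As n T) = kron_apply (\<lambda>_. mat 1) n T"
    unfolding kron_apply_comp using assms(2) by (intro kron_apply_cong) (simp add: matrix_inv_left)
  then show ?thesis using kron_apply_mat_1[OF assms(1)] by simp
qed

lemma sym_space_is_tensor: "T \<in> sym_space n \<Longrightarrow> is_tensor n T"
  by (simp add: sym_space_def)

lemma sym_space_permute_list:
  "T \<in> sym_space n \<Longrightarrow> p permutes {..<n} \<Longrightarrow> length xs = n \<Longrightarrow> T (permute_list p xs) = T xs"
  by (simp add: sym_space_def)

lemma kron_apply_permute_list:
  fixes T :: "'d::finite list \<Rightarrow> complex"
  assumes s: "s permutes {..<n}" and T: "T \<in> sym_space n"
    and xs: "length xs = n"
  shows "kron_apply As n T (permute_list s xs) = kron_apply (\<lambda>k. As (inv s k)) n T xs"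
proof -
  let ?L = "{ys::'d list. length ys = n}"
  have nth: "permute_list s zs ! k = zs ! s k" if "length zs = n" "k < n" for zs :: "'d list" and k
    using permute_list_nth[of s zs k] s that by simp
  have cancel: "permute_list p (permute_list q zs) = zs"
    if "p permutes {..<n}" "q \<circ> p = id" "length zs = n" for p q and zs :: "'d list"
    using permute_list_compose[of p zs q] that by simp
  have "permute_list (inv s) (permute_list s zs) = zs" if "length zs = n" for zs :: "'d list"
    using cancel[OF permutes_inv[OF s] _ that] permutes_inv_o[OF s] by simp
  moreover have "permute_list s (permute_list (inv s) zs) = zs" if "length zs = n" for zs :: "'d list"
    using cancel[OF s _ that] permutes_inv_o[OF s] by simp
  ultimately have bij: "bij_betw (permute_list s) ?L ?L"
    by (intro bij_betw_byWitness[where f'="permute_list (inv s)"]) auto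
  have "kron_apply As n T (permute_list s xs) = (\<Sum>ys\<in>?L. (\<Prod>k<n. As k $ (xs ! s k) $ (ys ! k)) * T ys)"
    using xs by (simp add: kron_apply_def nth)
  also have "\<dots> = (\<Sum>zs\<in>?L. (\<Prod>k<n. As k $ (xs ! s k) $ (permute_list s zs ! k)) * T (permute_list s zs))"
    by (rule sum.reindex_bij_betw[OF bij, symmetric])
  also have "\<dots> = (\<Sum>zs\<in>?L. (\<Prod>k<n. As (inv s (s k)) $ (xs ! s k) $ (zs ! s k)) * T zs)"
    by (intro sum.cong) (simp_all add: nth sym_space_permute_list[OF T s] permutes_inverses(2)[OF s])
  also have "\<dots> = (\<Sum>zs\<in>?L. (\<Prod>k<n. As (inv s k) $ (xs ! k) $ (zs ! k)) * T zs)"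
  proof -
    have "(\<Prod>k<n. As (inv s (s k)) $ (xs ! s k) $ (zs ! s k)) = (\<Prod>k<n. As (inv s k) $ (xs ! k) $ (zs ! k))"
      for zs by (rule prod.reindex_bij_betw[OF permutes_imp_bij[OF s]])
    then show ?thesis by simp
  qed
  also have "\<dots> = kron_apply (\<lambda>k. As (inv s k)) n T xs"
    using xs by (simp add: kron_apply_def)
  finally show ?thesis .
qed

definition slot_apply ::
    "nat \<Rightarrow> nat \<Rightarrow> complex^'d^'d \<Rightarrow> ('d::finite list \<Rightarrow> complex) \<Rightarrow> ('d list \<Rightarrow> complex)" where
  "slot_apply n k X T = kron_apply (\<lambda>i. if i = k then X else mat 1) n T"

lemma first_apply_eq_slot_apply: "first_apply Y n T = slot_apply n 0 Y T"
  by (simp add: first_apply_def slot_apply_def)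

lemma is_tensor_slot_apply: "is_tensor n (slot_apply n k X T)"
  by (simp add: slot_apply_def is_tensor_kron_apply)

lemma slot_apply_slot_apply: "slot_apply n k X (slot_apply n k Y T) = slot_apply n k (X ** Y) T"
  unfolding slot_apply_def kron_apply_comp by (rule kron_apply_cong) simp

lemma slot_apply_commute:
  "j \<noteq> k \<Longrightarrow> slot_apply n j X (slot_apply n k Y T) = slot_apply n k Y (slot_apply n j X T)"
  unfolding slot_apply_def kron_apply_comp by (rule kron_apply_cong) auto

lemma slot_apply_mat_1: "is_tensor n T \<Longrightarrow> slot_apply n k (mat 1) T = T"
  by (simp add: slot_apply_def kron_apply_mat_1)

lemma kron_apply_slot_apply:
  "kron_apply As n (slot_apply n k X T) = kron_apply (\<lambda>i. if i = k then As i ** X else As i) n T"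
  unfolding slot_apply_def kron_apply_comp by (rule kron_apply_cong) simp

lemma slot_apply_kron_apply_intertwine:
  assumes "C ** As k = As k ** D"
  shows "slot_apply n k C (kron_apply As n T) = kron_apply As n (slot_apply n k D T)"
  unfolding slot_apply_def kron_apply_comp using assms by (intro kron_apply_cong) simp

lemma slot_apply_permute_list:
  fixes T :: "'d::finite list \<Rightarrow> complex"
  assumes T: "T \<in> sym_space n" and s: "s permutes {..<n}" and xs: "length xs = n"
  shows "slot_apply n k X T (permute_list s xs) = slot_apply n (s k) X T xs"
proof -
  have "slot_apply n k X T (permute_list s xs)
      = kron_apply (\<lambda>i. if inv s i = k then X else mat 1) n T xs"
    unfolding slot_apply_def
    using kron_apply_permute_list[OF s T xs] .
  also have "\<dots> = slot_apply n (s k) X T xs"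
    unfolding slot_apply_def
  proof (rule fun_cong[where x=xs], rule kron_apply_cong)
    show "(if inv s i = k then X else mat 1) = (if i = s k then X else mat 1)" for i
      using permutes_inv_eq[OF s, of i k] by auto
  qed
  finally show ?thesis .
qed

lemma slot_apply_expand:
  fixes T :: "'d::finite list \<Rightarrow> complex"
  assumes "k < n" and "length xs = n"
  shows "slot_apply n k X T xs = (\<Sum>ys\<in>{ys. length ys = n}.
      X $ (xs ! k) $ (ys ! k) * ((\<Prod>i\<in>{..<n} - {k}. (mat 1 :: complex^'d^'d) $ (xs ! i) $ (ys ! i)) * T ys))"
proof -
  have "(\<Prod>i<n. (if i = k then X else mat 1) $ (xs ! i) $ (ys ! i))
      = X $ (xs ! k) $ (ys ! k) * (\<Prod>i\<in>{..<n} - {k}. (mat 1 :: complex^'d^'d) $ (xs ! i) $ (ys ! i))"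
    for ys :: "'d list"
  proof -
    have "(\<Prod>i<n. (if i = k then X else mat 1) $ (xs ! i) $ (ys ! i))
        = (if k = k then X else mat 1) $ (xs ! k) $ (ys ! k)
          * (\<Prod>i\<in>{..<n} - {k}. (if i = k then X else mat 1) $ (xs ! i) $ (ys ! i))"
      by (rule prod.remove[of "{..<n}" k]) (use assms(1) in auto)
    also have "(\<Prod>i\<in>{..<n} - {k}. (if i = k then X else mat 1) $ (xs ! i) $ (ys ! i))
        = (\<Prod>i\<in>{..<n} - {k}. (mat 1 :: complex^'d^'d) $ (xs ! i) $ (ys ! i))"
      by (rule prod.cong) auto
    finally show ?thesis by simp
  qed
  then show ?thesis
    unfolding slot_apply_def kron_apply_def if_P[OF assms(2)]
    by (intro sum.cong refl) (simp only: mult.assoc)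
qed

lemma slot_apply_add:
  "k < n \<Longrightarrow> slot_apply n k (X + Y) T xs = slot_apply n k X T xs + slot_apply n k Y T xs"
  by (cases "length xs = n")
    (simp_all add: slot_apply_expand sum.distrib distrib_right, simp add: slot_apply_def kron_apply_def)

lemma slot_apply_mat:
  assumes "is_tensor n T" and "k < n"
  shows "slot_apply n k (mat a) T xs = a * T xs"
proof (cases "length xs = n")
  case True
  have mat_a: "(mat a :: complex^'d^'d) $ i $ j = a * (mat 1 :: complex^'d^'d) $ i $ j" for i j
    by (simp add: mat_def)
  have "slot_apply n k (mat a) T xs = a * slot_apply n k (mat 1) T xs"
    using True assms(2) by (simp only: slot_apply_expand mat_a sum_distrib_left mult.assoc)
  then show ?thesis using slot_apply_mat_1[OF assms(1)] by simp
qed (use assms(1) in \<open>simp add: slot_apply_def kron_apply_def is_tensor_def\<close>)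

lemma slot_apply_in_sym_space_iff:
  fixes T :: "'d::finite list \<Rightarrow> complex"
  assumes T: "T \<in> sym_space n" and n: "0 < n"
  shows "slot_apply n 0 C T \<in> sym_space n \<longleftrightarrow> (\<forall>j<n. slot_apply n j C T = slot_apply n 0 C T)"
proof (intro iffI allI impI)
  fix j assume sym: "slot_apply n 0 C T \<in> sym_space n" and j: "j < n"
  define t where "t = Transposition.transpose 0 j"
  have t: "t permutes {..<n}" unfolding t_def using j n by (intro permutes_swap_id) auto
  show "slot_apply n j C T = slot_apply n 0 C T"
  proof (rule ext)
    fix xs :: "'d list"
    show "slot_apply n j C T xs = slot_apply n 0 C T xs"
    proof (cases "length xs = n")
      case True
      have "slot_apply n 0 C T xs = slot_apply n 0 C T (permute_list t xs)"
        using sym_space_permute_list[OF sym t True] by simp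
      also have "\<dots> = slot_apply n j C T xs"
        using slot_apply_permute_list[OF T t True] by (simp add: t_def)
      finally show ?thesis by simp
    qed (simp add: slot_apply_def kron_apply_def)
  qed
next
  assume slots: "\<forall>j<n. slot_apply n j C T = slot_apply n 0 C T"
  show "slot_apply n 0 C T \<in> sym_space n"
    unfolding sym_space_def
  proof (intro CollectI conjI allI impI)
    fix p and xs :: "'d list" assume p: "p permutes {..<n} \<and> length xs = n"
    then have "slot_apply n 0 C T (permute_list p xs) = slot_apply n (p 0) C T xs"
      using slot_apply_permute_list[OF T, of p xs] by simp
    moreover have "p 0 < n" using permutes_in_image[of p "{..<n}" 0] p n by simp
    ultimately show "slot_apply n 0 C T (permute_list p xs) = slot_apply n 0 C T xs"
      using slots by metis
  qed (rule is_tensor_slot_apply)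
qed

section \<open>Moving operators between tensor factors\<close>

lemma slot_apply_poly_matrix_move:
  fixes T :: "'d::finite list \<Rightarrow> complex"
  assumes T: "is_tensor n T" and j: "j < n" and k: "k < n"
    and M: "slot_apply n j M T = slot_apply n k M T"
  shows "slot_apply n j (poly_matrix p M) T = slot_apply n k (poly_matrix p M) T"
proof (cases "j = k")
  case False
  show ?thesis
  proof (induction p)
    case 0
    show ?case using slot_apply_mat[OF T j, of 0] slot_apply_mat[OF T k, of 0] by (simp add: fun_eq_iff)
  next
    case (pCons a p)
    let ?X = "poly_matrix p M"
    have "slot_apply n j (M ** ?X) T = slot_apply n j M (slot_apply n j ?X T)"
      by (simp add: slot_apply_slot_apply)
    also have "\<dots> = slot_apply n j M (slot_apply n k ?X T)"
      by (simp add: pCons.IH)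
    also have "\<dots> = slot_apply n k ?X (slot_apply n j M T)"
      using False by (simp add: slot_apply_commute)
    also have "\<dots> = slot_apply n k ?X (slot_apply n k M T)"
      by (simp add: M)
    also have "\<dots> = slot_apply n k (M ** ?X) T"
      by (simp add: slot_apply_slot_apply poly_matrix_commute)
    finally show ?case
      using T j k by (simp add: fun_eq_iff poly_matrix_pCons slot_apply_add slot_apply_mat)
  qed
qed simp

lemma kron_apply_sym_slot_move:
  fixes psi :: "'d::finite list \<Rightarrow> complex"
  assumes psi: "psi \<in> sym_space n" and phi: "kron_apply As n psi \<in> sym_space n"
    and inv: "\<forall>k<n. invertible (As k)" and i: "i < n" and j: "j < n" and "i \<noteq> j"
  shows "slot_apply n i (matrix_inv (As j) ** As i) psi = slot_apply n j (matrix_inv (As j) ** As i) psi"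
proof -
  define M where "M = matrix_inv (As j) ** As i"
  define N where "N = matrix_inv (As i) ** As j"
  define t where "t = Transposition.transpose i j"
  have t: "t permutes {..<n}" unfolding t_def using i j by (intro permutes_swap_id) auto
  have swap: "kron_apply As n psi = kron_apply (\<lambda>k. As (t k)) n psi"
  proof (rule ext)
    fix xs :: "'d list"
    show "kron_apply As n psi xs = kron_apply (\<lambda>k. As (t k)) n psi xs"
    proof (cases "length xs = n")
      case True
      have "kron_apply As n psi xs = kron_apply As n psi (permute_list t xs)"
        using sym_space_permute_list[OF phi t True] by simp
      also have "\<dots> = kron_apply (\<lambda>k. As (t k)) n psi xs"
        using kron_apply_permute_list[OF t psi True] by (simp add: t_def)
      finally show ?thesis .
    qed (simp add: kron_apply_def)
  qed
  \<comment> \<open>Undoing the factors of phi = (A_t(0) \<otimes> ... \<otimes> A_t(n-1)) psi leaves M in slot j, N in slot i.\<close>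
  have "psi = kron_apply (\<lambda>k. matrix_inv (As k)) n (kron_apply As n psi)"
    using kron_apply_inverse[OF sym_space_is_tensor[OF psi] inv] by simp
  also have "\<dots> = slot_apply n i N (slot_apply n j M psi)"
    unfolding swap kron_apply_comp slot_apply_def
    using \<open>i \<noteq> j\<close> inv by (intro kron_apply_cong) (auto simp: t_def M_def N_def matrix_inv_left)
  finally have psi_eq: "psi = slot_apply n i N (slot_apply n j M psi)" .
  have "M ** N = mat 1"
    using inv i j by (simp add: M_def N_def matrix_inv_mult_cancel)
  have "slot_apply n i M psi = slot_apply n i M (slot_apply n i N (slot_apply n j M psi))"
    using psi_eq by (rule arg_cong)
  also have "\<dots> = slot_apply n j M psi"
    using \<open>M ** N = mat 1\<close> by (simp add: slot_apply_slot_apply slot_apply_mat_1 is_tensor_slot_apply)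
  finally show ?thesis by (simp add: M_def)
qed

lemma slot_apply_conj_third_slot:
  assumes T: "is_tensor n T"
    and M: "slot_apply n 0 M T = slot_apply n j M T" and N: "slot_apply n j N T = slot_apply n 0 N T"
    and NM: "N ** M = mat 1" and B: "slot_apply n j B T = slot_apply n m B T"
    and "j \<noteq> 0" and "m \<noteq> 0" and "m \<noteq> j"
  shows "slot_apply n j (M ** B ** N) T = slot_apply n m B T"
proof -
  have "slot_apply n j (M ** B ** N) T = slot_apply n j M (slot_apply n j B (slot_apply n j N T))"
    by (simp add: slot_apply_slot_apply matrix_mul_assoc)
  also have "\<dots> = slot_apply n j M (slot_apply n j B (slot_apply n 0 N T))"
    by (simp only: N)
  also have "\<dots> = slot_apply n 0 N (slot_apply n j M (slot_apply n m B T))"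
    using \<open>j \<noteq> 0\<close> by (simp add: slot_apply_commute B)
  also have "\<dots> = slot_apply n 0 N (slot_apply n m B (slot_apply n 0 M T))"
    using \<open>m \<noteq> j\<close> by (simp add: slot_apply_commute M)
  also have "\<dots> = slot_apply n m B T"
    using \<open>m \<noteq> 0\<close> T NM
    by (simp add: slot_apply_commute slot_apply_slot_apply slot_apply_mat_1 is_tensor_slot_apply)
  finally show ?thesis .
qed

lemma kron_apply_two_sym_uniform:
  fixes psi :: "'d::finite list \<Rightarrow> complex"
  assumes psi: "psi \<in> sym_space 2" and phi: "kron_apply As 2 psi \<in> sym_space 2"
    and inv: "\<forall>k<2. invertible (As k)"
  shows "\<exists>A. invertible A \<and> kron_apply (\<lambda>_. A) 2 psi = kron_apply As 2 psi"
proof -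
  define M where "M = matrix_inv (As 1) ** As 0"
  have A0: "invertible (As 0)" and A1: "invertible (As 1)" using inv by auto
  then have "invertible M" unfolding M_def by (intro invertible_mult invertible_matrix_inv)
  then obtain p where p: "poly_matrix p M ** poly_matrix p M = M"
    using invertible_matrix_sqrt by blast
  define R where "R = poly_matrix p M"
  have T: "is_tensor 2 psi" by (rule sym_space_is_tensor[OF psi])
  have "slot_apply 2 0 M psi = slot_apply 2 1 M psi"
    unfolding M_def by (rule kron_apply_sym_slot_move[OF psi phi inv]) auto
  then have R_move: "slot_apply 2 0 R psi = slot_apply 2 1 R psi"
    unfolding R_def by (intro slot_apply_poly_matrix_move[OF T]) auto
  have "kron_apply (\<lambda>_. R) 2 psi = slot_apply 2 0 R (slot_apply 2 1 R psi)"
    unfolding slot_apply_def kron_apply_comp by (rule kron_apply_cong) auto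
  also have "\<dots> = slot_apply 2 0 R (slot_apply 2 0 R psi)"
    by (simp only: R_move)
  also have "\<dots> = slot_apply 2 0 M psi"
    using p by (simp add: slot_apply_slot_apply R_def)
  finally have R_sq: "kron_apply (\<lambda>_. R) 2 psi = slot_apply 2 0 M psi" .
  have "R ** (R ** matrix_inv M) = mat 1"
    using p matrix_inv_right[OF \<open>invertible M\<close>] by (simp add: R_def matrix_mul_assoc)
  then have "invertible R" using invertible_right_inverse by blast
  have "kron_apply (\<lambda>_. As 1 ** R) 2 psi = kron_apply (\<lambda>_. As 1) 2 (slot_apply 2 0 M psi)"
    by (simp add: R_sq flip: kron_apply_comp)
  also have "\<dots> = kron_apply As 2 psi"
    unfolding kron_apply_slot_apply
  proof (rule kron_apply_cong)
    fix k :: nat assume "k < 2"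
    moreover have "As 1 ** M = As 0"
      using matrix_inv_right[OF A1] by (simp add: M_def matrix_mul_assoc)
    ultimately show "(if k = 0 then As 1 ** M else As 1) = As k"
      by (auto simp: less_2_cases_iff)
  qed
  finally show ?thesis
    using \<open>invertible R\<close> A1 invertible_mult by blast
qed

definition conj_preserves_sym ::
    "nat \<Rightarrow> complex^'d^'d \<Rightarrow> ('d::finite list \<Rightarrow> complex) \<Rightarrow> ('d list \<Rightarrow> complex) \<Rightarrow> bool" where
  "conj_preserves_sym n A psi phi \<longleftrightarrow> (\<forall>B. slot_apply n 0 B psi \<in> sym_space n \<longrightarrow>
      slot_apply n 0 (A ** B ** matrix_inv A) phi \<in> sym_space n)"

lemma conj_preserves_sym_uniform:
  fixes psi :: "'d::finite list \<Rightarrow> complex"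
  assumes psi: "psi \<in> sym_space n" and phi: "phi \<in> sym_space n" and n: "0 < n"
    and A: "invertible A" and phi_eq: "kron_apply (\<lambda>_. A) n psi = phi"
  shows "conj_preserves_sym n A psi phi"
  unfolding conj_preserves_sym_def
    slot_apply_in_sym_space_iff[OF psi n] slot_apply_in_sym_space_iff[OF phi n]
proof (intro allI impI)
  fix B j assume B: "\<forall>j<n. slot_apply n j B psi = slot_apply n 0 B psi" and j: "j < n"
  have "A ** B ** matrix_inv A ** A = A ** B"
    using matrix_inv_left[OF A] by (simp flip: matrix_mul_assoc)
  then have "slot_apply n k (A ** B ** matrix_inv A) phi = kron_apply (\<lambda>_. A) n (slot_apply n k B psi)"
    for k unfolding phi_eq[symmetric] by (rule slot_apply_kron_apply_intertwine)
  then show "slot_apply n j (A ** B ** matrix_inv A) phi = slot_apply n 0 (A ** B ** matrix_inv A) phi"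
    using B j by metis
qed

lemma conj_preserves_sym_first_factor:
  fixes psi :: "'d::finite list \<Rightarrow> complex"
  assumes n: "3 \<le> n" and psi: "psi \<in> sym_space n" and phi: "phi \<in> sym_space n"
    and inv: "\<forall>k<n. invertible (As k)" and phi_eq: "kron_apply As n psi = phi"
  shows "conj_preserves_sym n (As 0) psi phi"
  unfolding conj_preserves_sym_def
proof (intro allI impI)
  have n0: "0 < n" using n by simp
  fix B assume "slot_apply n 0 B psi \<in> sym_space n"
  then have B: "\<forall>j<n. slot_apply n j B psi = slot_apply n 0 B psi"
    unfolding slot_apply_in_sym_space_iff[OF psi n0] .
  let ?C = "As 0 ** B ** matrix_inv (As 0)"
  have A0: "invertible (As 0)" using inv n by simp
  have "slot_apply n j ?C phi = slot_apply n 0 ?C phi" if j: "j < n" "j \<noteq> 0" for j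
  proof -
    define M where "M = matrix_inv (As j) ** As 0"
    define N where "N = matrix_inv (As 0) ** As j"
    define m where "m = (if j = 1 then 2 else 1 :: nat)"
    \<comment> \<open>a third slot, where B is parked while M and N move between slots 0 and j\<close>
    have m: "m < n" "m \<noteq> 0" "m \<noteq> j" using n by (auto simp: m_def)
    have Aj: "invertible (As j)" using inv j by simp
    have third_slot: "slot_apply n j (M ** B ** N) psi = slot_apply n m B psi"
    proof (rule slot_apply_conj_third_slot[OF sym_space_is_tensor[OF psi]])
      show "slot_apply n 0 M psi = slot_apply n j M psi"
        unfolding M_def using phi_eq phi inv j n by (intro kron_apply_sym_slot_move[OF psi]) auto
      show "slot_apply n j N psi = slot_apply n 0 N psi"
        unfolding N_def using phi_eq phi inv j n by (intro kron_apply_sym_slot_move[OF psi]) auto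
      show "N ** M = mat 1" using A0 Aj by (simp add: M_def N_def matrix_inv_mult_cancel)
      show "slot_apply n j B psi = slot_apply n m B psi" using B j m(1) by metis
    qed (use j m in auto)
    have "?C ** As j = As j ** (M ** B ** N)"
      using matrix_inv_right[OF Aj] by (simp add: M_def N_def matrix_mul_assoc)
    then have "slot_apply n j ?C phi = kron_apply As n (slot_apply n j (M ** B ** N) psi)"
      unfolding phi_eq[symmetric] by (rule slot_apply_kron_apply_intertwine)
    also have "\<dots> = kron_apply As n (slot_apply n 0 B psi)"
      by (simp only: third_slot B[rule_format, OF m(1)])
    also have "\<dots> = slot_apply n 0 ?C phi"
      unfolding phi_eq[symmetric] using matrix_inv_left[OF A0]
      by (intro slot_apply_kron_apply_intertwine[symmetric]) (simp flip: matrix_mul_assoc)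
    finally show ?thesis .
  qed
  then have "\<forall>j<n. slot_apply n j ?C phi = slot_apply n 0 ?C phi" by auto
  then show "slot_apply n 0 ?C phi \<in> sym_space n"
    unfolding slot_apply_in_sym_space_iff[OF phi n0] .
qed

theorem mainTheorem9:
  fixes n :: nat and psi phi :: "'d::finite list \<Rightarrow> complex"
    and As :: "nat \<Rightarrow> complex^'d^'d"
  assumes "n \<ge> 2"
    and "psi \<in> sym_space n" and "phi \<in> sym_space n"
    and "\<forall>k<n. invertible (As k)"
    and "kron_apply As n psi = phi"
  shows "\<exists>A :: complex^'d^'d. invertible A \<and>
      (\<forall>B. first_apply B n psi \<in> sym_space n \<longrightarrow>
           first_apply (A ** B ** matrix_inv A) n phi \<in> sym_space n) \<and>
      (\<forall>B'. first_apply B' n phi \<in> sym_space n \<longrightarrow>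
           first_apply (matrix_inv A ** B' ** A) n psi \<in> sym_space n)"
proof -
  note psi = assms(2) and phi = assms(3) and inv = assms(4) and phi_eq = assms(5)
  have psi_eq: "kron_apply (\<lambda>k. matrix_inv (As k)) n phi = psi"
    using kron_apply_inverse[OF sym_space_is_tensor[OF psi] inv] phi_eq by simp
  obtain A where A: "invertible A"
    and fwd: "conj_preserves_sym n A psi phi" and bwd: "conj_preserves_sym n (matrix_inv A) phi psi"
  proof (cases "n = 2")
    case True
    then obtain A where A: "invertible A" and A_psi: "kron_apply (\<lambda>_. A) n psi = phi"
      using kron_apply_two_sym_uniform[of psi As] psi phi inv phi_eq by auto
    have A_phi: "kron_apply (\<lambda>_. matrix_inv A) n phi = psi"
      using kron_apply_inverse[OF sym_space_is_tensor[OF psi], of "\<lambda>_. A"] A A_psi by simp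
    show ?thesis
      using True conj_preserves_sym_uniform[OF psi phi _ A A_psi]
        conj_preserves_sym_uniform[OF phi psi _ invertible_matrix_inv[OF A] A_phi]
      by (intro that[OF A]) simp_all
  next
    case False
    then have n: "3 \<le> n" using assms(1) by simp
    have "\<forall>k<n. invertible (matrix_inv (As k))" using inv invertible_matrix_inv by blast
    then show ?thesis
      using n inv by (intro that[of "As 0"] conj_preserves_sym_first_factor[OF n psi phi inv phi_eq]
          conj_preserves_sym_first_factor[OF n phi psi _ psi_eq]) simp_all
  qed
  then show ?thesis
    using fwd bwd unfolding first_apply_eq_slot_apply conj_preserves_sym_def matrix_inv_matrix_inv[OF A]
    by (intro exI[of _ A] conjI A) simp_all
qed

end
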